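(* Let $a,d$ be real numbers and let $T_n(t,\alpha,\delta)$ denote the general Eulerian polynomials defined below. Then for every integer $n\ge 0$ and every complex $t$ with $|t|<1$ (equivalently, as an identity of formal power series in $t$), $$-\frac{T_n(t,a-d,-d)}{(t-1)^{n+1}}=\sum_{j=0}^{\infty}t^j(a+jd)^n.$$
   Context: For real numbers $\alpha,\delta$, the general Eulerian numbers $A_{n,k}(\alpha,\delta)$ (integers $n\ge 0$, $k$) are defined by $A_{0,-1}(\alpha,\delta)=1$, $A_{n,k}(\alpha,\delta)=0$ whenever $k\ge n$ or $k\le -2$, and for $n\ge 1$, $-1\le k\le n-1$: $$A_{n,k}(\alpha,\delta)=(-\alpha+(k+2)\delta)A_{n-1,k}(\alpha,\delta)+(\alpha+(n-k-1)\delta)A_{n-1,k-1}(\alpha,\delta).$$ The general Eulerian polynomials are $T_n(t,\alpha,\delta)=\sum_{k=-1}^{n-1}A_{n,k}(\alpha,\delta)t^{k+1}$ (so $T_0=1$). In the claim, $T_n(t,a-d,-d)$ is this polynomial with $\alpha=a-d$, $\delta=-d$. Also $x^0=1$ for all $x$. *)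

theory Defs
  imports Complex_Main
begin

fun gen_eulerian_num :: "real \<Rightarrow> real \<Rightarrow> nat \<Rightarrow> int \<Rightarrow> real" where
  "gen_eulerian_num \<alpha> \<delta> 0 k = (if k = -1 then 1 else 0)"
| "gen_eulerian_num \<alpha> \<delta> (Suc n) k =
     (if k \<ge> int (Suc n) \<or> k \<le> -2 then 0
      else (- \<alpha> + (of_int k + 2) * \<delta>) * gen_eulerian_num \<alpha> \<delta> n k
         + (\<alpha> + (of_nat (Suc n) - of_int k - 1) * \<delta>) * gen_eulerian_num \<alpha> \<delta> n (k - 1))"

definition gen_eulerian_poly :: "nat \<Rightarrow> complex \<Rightarrow> real \<Rightarrow> real \<Rightarrow> complex" where
  "gen_eulerian_poly n t \<alpha> \<delta> =
     (\<Sum>k\<in>{-1..int n - 1}. of_real (gen_eulerian_num \<alpha> \<delta> n k) * t ^ nat (k + 1))"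

end

theory Submission
  imports Defs
begin

text \<open>
  Write \<open>S\<^sub>n(t) = \<Sum>\<^sub>j t\<^sup>j (a + j d)\<^sup>n\<close>. Applying \<open>a + d t (d/dt)\<close> termwise to \<open>S\<^sub>n\<close> gives \<open>S\<^sub>n\<^sub>+\<^sub>1\<close>.
  On the other side, the recurrence of the Eulerian numbers says exactly that
  \<open>T\<^sub>n\<^sub>+\<^sub>1 = (a (t - 1) - (n + 1) d t) T\<^sub>n + d (t - 1) t T\<^sub>n'\<close>, and this is what the same operator
  does to \<open>-T\<^sub>n/(t - 1)\<^sup>n\<^sup>+\<^sup>1\<close>. Induction on \<open>n\<close>, starting from the geometric series, finishes the proof.
\<close>

lemma power_series_sums_times_index:
  fixes c :: "nat \<Rightarrow> 'a::{real_normed_field,banach}"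
  assumes f: "\<And>s. norm s < 1 \<Longrightarrow> (\<lambda>j. c j * s ^ j) sums f s"
    and t: "norm t < 1"
    and D: "(f has_field_derivative D) (at t)"
  shows "(\<lambda>j. of_nat j * c j * t ^ j) sums (t * D)"
proof -
  define K :: 'a where "K = of_real ((1 + norm t) / 2)"
  have norm_K: "norm K = (1 + norm t) / 2"
    unfolding K_def norm_of_real by simp
  have "norm K < 1"
    using norm_K t by simp
  then have "summable (\<lambda>j. c j * K ^ j)"
    using f sums_summable by blast
  then have "((\<lambda>s. \<Sum>j. c j * s ^ j) has_field_derivative (\<Sum>j. diffs c j * t ^ j)) (at t)"
    by (rule termdiffs_strong) (use t norm_K in simp)
  then have "(f has_field_derivative (\<Sum>j. diffs c j * t ^ j)) (at t)"
  proof (rule has_field_derivative_transform_within_open[of _ _ _ "{s. norm s < 1}"])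
    show "open {s::'a. norm s < 1}"
      by (rule open_Collect_less[OF continuous_on_norm_id continuous_on_const])
    show "(\<Sum>j. c j * s ^ j) = f s" if "s \<in> {s. norm s < 1}" for s
      using f[of s] that by (simp add: sums_iff)
  qed (use t in simp)
  then have D_eq: "D = (\<Sum>j. diffs c j * t ^ j)"
    using D DERIV_unique by blast
  have "summable (\<lambda>j. diffs c j * t ^ j)"
    by (rule termdiff_converges[of t 1]) (use t f sums_summable in auto)
  then have "(\<lambda>j. t * (diffs c j * t ^ j)) sums (t * D)"
    unfolding D_eq by (intro sums_mult summable_sums)
  then have "(\<lambda>j. of_nat (Suc j) * c (Suc j) * t ^ Suc j) sums (t * D)"
    by (simp add: diffs_def mult_ac)
  then show ?thesis
    by (subst (asm) sums_Suc_iff) simp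
qed

lemma has_field_derivative_divide_power_sub_one:
  fixes f :: "'a::real_normed_field \<Rightarrow> 'a"
  assumes f: "(f has_field_derivative D) (at t)" and t: "t \<noteq> 1"
  shows "((\<lambda>s. - f s / (s - 1) ^ (n + 1)) has_field_derivative
           - (D * (t - 1) - of_nat (Suc n) * f t) / (t - 1) ^ (n + 2)) (at t)"
proof -
  have "((\<lambda>s. (s - 1) ^ Suc n) has_field_derivative of_nat (Suc n) * (t - 1) ^ n) (at t)"
    using DERIV_power_Suc[OF DERIV_diff[OF DERIV_ident DERIV_const]] by simp
  from DERIV_minus[OF DERIV_divide[OF f this]] t
  have "((\<lambda>s. - f s / (s - 1) ^ (n + 1)) has_field_derivative
      - ((D * (t - 1) ^ Suc n - f t * (of_nat (Suc n) * (t - 1) ^ n)) / ((t - 1) ^ Suc n * (t - 1) ^ Suc n)))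
      (at t)"
    unfolding minus_divide_left by simp
  then show ?thesis
  proof (rule DERIV_cong)
    have "(t - 1) ^ Suc n * (t - 1) ^ Suc n = (t - 1) ^ (n + 2) * (t - 1) ^ n"
      by (simp add: power_add[symmetric])
    then show "- ((D * (t - 1) ^ Suc n - f t * (of_nat (Suc n) * (t - 1) ^ n))
        / ((t - 1) ^ Suc n * (t - 1) ^ Suc n)) = - (D * (t - 1) - of_nat (Suc n) * f t) / (t - 1) ^ (n + 2)"
      using t by (simp add: divide_simps) (simp add: algebra_simps)
  qed
qed

text \<open>\<open>eulerian_coeff a d n i\<close> is the coefficient of \<open>t\<^sup>i\<close> in \<open>T\<^sub>n(t, a - d, -d)\<close>.\<close>

definition eulerian_coeff :: "real \<Rightarrow> real \<Rightarrow> nat \<Rightarrow> nat \<Rightarrow> real" where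
  "eulerian_coeff a d n i = gen_eulerian_num (a - d) (- d) n (int i - 1)"

definition eulerian_sum :: "real \<Rightarrow> real \<Rightarrow> nat \<Rightarrow> complex \<Rightarrow> complex" where
  "eulerian_sum a d n t = (\<Sum>i\<le>n. of_real (eulerian_coeff a d n i) * t ^ i)"

definition eulerian_theta_sum :: "real \<Rightarrow> real \<Rightarrow> nat \<Rightarrow> complex \<Rightarrow> complex" where
  "eulerian_theta_sum a d n t = (\<Sum>i\<le>n. of_nat i * of_real (eulerian_coeff a d n i) * t ^ i)"

lemma eulerian_coeff_eq_0: "n < i \<Longrightarrow> eulerian_coeff a d n i = 0"
  by (cases n) (auto simp: eulerian_coeff_def)

lemma eulerian_coeff_Suc:
  "eulerian_coeff a d (Suc n) i = (- a - real i * d) * eulerian_coeff a d n i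
     + (if i = 0 then 0 else (a - (real n + 2 - real i) * d) * eulerian_coeff a d n (i - 1))"
proof (cases "i \<le> Suc n")
  case True
  show ?thesis
  proof (cases i)
    case 0
    then show ?thesis
      by (cases n) (auto simp: eulerian_coeff_def algebra_simps)
  next
    case (Suc k)
    with True show ?thesis
      by (simp add: eulerian_coeff_def algebra_simps)
  qed
next
  case False
  then show ?thesis
    using eulerian_coeff_eq_0[of n i] eulerian_coeff_eq_0[of "Suc n" i]
      eulerian_coeff_eq_0[of n "i - 1"] by auto
qed

lemma gen_eulerian_poly_eq_eulerian_sum:
  "gen_eulerian_poly n t (a - d) (- d) = eulerian_sum a d n t"
  unfolding gen_eulerian_poly_def eulerian_sum_def eulerian_coeff_def
  by (rule sum.reindex_bij_witness[of _ "\<lambda>i. int i - 1" "\<lambda>k. nat (k + 1)"]) auto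

lemma eulerian_sum_Suc:
  "eulerian_sum a d (Suc n) t =
     (of_real a * (t - 1) - of_real d * of_nat (Suc n) * t) * eulerian_sum a d n t
     + of_real d * (t - 1) * eulerian_theta_sum a d n t"
proof -
  let ?b = "eulerian_coeff a d n"
  have "eulerian_sum a d (Suc n) t =
      (\<Sum>i\<le>Suc n. of_real ((- a - real i * d) * ?b i) * t ^ i)
      + (\<Sum>i\<le>Suc n. of_real (if i = 0 then 0 else (a - (real n + 2 - real i) * d) * ?b (i - 1)) * t ^ i)"
    unfolding eulerian_sum_def eulerian_coeff_Suc by (simp add: sum.distrib distrib_right)
  also have "(\<Sum>i\<le>Suc n. of_real ((- a - real i * d) * ?b i) * t ^ i)
      = - of_real a * eulerian_sum a d n t - of_real d * eulerian_theta_sum a d n t"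
    by (simp add: eulerian_coeff_eq_0 eulerian_sum_def eulerian_theta_sum_def sum_distrib_left
        sum_subtractf[symmetric] algebra_simps)
  also have "(\<Sum>i\<le>Suc n. of_real (if i = 0 then 0 else (a - (real n + 2 - real i) * d) * ?b (i - 1)) * t ^ i)
      = (\<Sum>i\<le>n. of_real ((a - (real n + 1 - real i) * d) * ?b i) * t ^ Suc i)"
    by (subst sum.atMost_Suc_shift) (simp add: algebra_simps)
  also have "\<dots> = t * ((of_real a - of_real d * of_nat (Suc n)) * eulerian_sum a d n t
                       + of_real d * eulerian_theta_sum a d n t)"
    unfolding eulerian_sum_def eulerian_theta_sum_def
    by (simp add: sum_distrib_left sum_subtractf[symmetric] sum.distrib[symmetric] algebra_simps)
  finally show ?thesis
    by (simp add: algebra_simps)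
qed

lemma eulerian_sum_has_field_derivative:
  obtains D where "(eulerian_sum a d n has_field_derivative D) (at t)"
    and "t * D = eulerian_theta_sum a d n t"
proof
  let ?b = "\<lambda>i. of_real (eulerian_coeff a d n i) :: complex"
  show "(eulerian_sum a d n has_field_derivative (\<Sum>i\<le>n. ?b i * (of_nat i * t ^ (i - 1)))) (at t)"
    unfolding eulerian_sum_def by (auto intro!: derivative_eq_intros simp: mult_ac)
  have "t * (?b i * (of_nat i * t ^ (i - 1))) = of_nat i * ?b i * t ^ i" for i
    by (cases i) auto
  then show "t * (\<Sum>i\<le>n. ?b i * (of_nat i * t ^ (i - 1))) = eulerian_theta_sum a d n t"
    unfolding eulerian_theta_sum_def sum_distrib_left by (intro sum.cong) simp_all
qed

lemma eulerian_sum_sums: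
  fixes t :: complex
  assumes "norm t < 1"
  shows "(\<lambda>j. t ^ j * of_real (a + real j * d) ^ n) sums
           (- eulerian_sum a d n t / (t - 1) ^ (n + 1))"
  using assms
proof (induction n arbitrary: t)
  case 0
  have "eulerian_sum a d 0 t = 1"
    by (simp add: eulerian_sum_def eulerian_coeff_def)
  moreover have "1 / (1 - t) = - 1 / (t - 1)"
    by (simp add: minus_divide_right)
  ultimately show ?case
    using geometric_sums[OF "0.prems"] by simp
next
  case (Suc n)
  define c :: "nat \<Rightarrow> complex" where "c j = of_real (a + real j * d) ^ n" for j
  define G where "G s = - eulerian_sum a d n s / (s - 1) ^ (n + 1)" for s
  have series_G: "(\<lambda>j. c j * s ^ j) sums G s" if "norm s < 1" for s
    using Suc.IH[OF that] unfolding c_def G_def by (simp add: mult.commute)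
  have t1: "t - 1 \<noteq> 0"
    using Suc.prems by auto
  obtain D where D: "(eulerian_sum a d n has_field_derivative D) (at t)"
    and theta: "t * D = eulerian_theta_sum a d n t"
    by (rule eulerian_sum_has_field_derivative)
  define G' where "G' = - (D * (t - 1) - of_nat (Suc n) * eulerian_sum a d n t) / (t - 1) ^ (n + 2)"
  have "(G has_field_derivative G') (at t)"
    unfolding G_def G'_def using D t1 by (intro has_field_derivative_divide_power_sub_one) simp_all
  with series_G Suc.prems have theta_series: "(\<lambda>j. of_nat j * c j * t ^ j) sums (t * G')"
    by (rule power_series_sums_times_index)
  have "(\<lambda>j. of_real a * (c j * t ^ j) + of_real d * (of_nat j * c j * t ^ j))
          sums (of_real a * G t + of_real d * (t * G'))"
    by (intro sums_add sums_mult series_G theta_series Suc.prems)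
  moreover have "of_real a * (c j * t ^ j) + of_real d * (of_nat j * c j * t ^ j)
      = t ^ j * of_real (a + real j * d) ^ Suc n" for j
    unfolding c_def by (simp add: algebra_simps)
  moreover have "of_real a * G t + of_real d * (t * G')
      = - eulerian_sum a d (Suc n) t / (t - 1) ^ (Suc n + 1)"
    unfolding G_def G'_def eulerian_sum_Suc theta[symmetric] using t1
    by (simp add: divide_simps) (simp add: algebra_simps)
  ultimately show ?case
    by simp
qed

theorem proposition3p4:
  fixes a d :: real and n :: nat and t :: complex
  assumes "norm t < 1"
  shows "(\<lambda>j. t ^ j * (of_real (a + real j * d)) ^ n) sums
           (- gen_eulerian_poly n t (a - d) (- d) / (t - 1) ^ (n + 1))"
  unfolding gen_eulerian_poly_eq_eulerian_sum using assms by (rule eulerian_sum_sums)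

end
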